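(* Consider a black-white array (BWA) storing at most $n=2^m$ values. Suppose the values are uniformly distributed, so that the probability that the searched value lies in a given active segment is proportional to that segment's length. Then the amortized (expected) time of a search for a value that is present in the BWA is $O(\log n)$.
   Context: A black-white array (BWA) of size $N=2^K$ stores values from a totally ordered set. Its white array is $W[1..N-1]$. For $i\ge0$, the segment of rank $i$ is the index block $[2^i,2^{i+1}-1]$, of length $2^i$. A state variable $\mathtt{total}$ counts stored values. The rank-$i$ segment is active iff bit $i$ of $\mathtt{total}$ is $1$. Between operations, all stored values lie in the active white segments, each sorted ascending. Search$(v)$: for $i=K-1$ down to $0$, if the rank-$i$ segment is active, binary-search the white rank-$i$ segment for $v$. A binary search of a segment of length $L$ costs $O(\log L+1)$. Return the index at the first success, or Nil if none. *)

theory Defs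
  imports Complex_Main
begin

text \<open>Black-white array with array size N = 2^K. The rank-i segment is the index
block [2^i, 2^(i+1)-1] of length 2^i; it is active iff bit i of tot is 1.\<close>

definition seg_len :: "nat \<Rightarrow> nat" where
  "seg_len i = 2 ^ i"

definition bwa_active :: "nat \<Rightarrow> nat \<Rightarrow> bool" where
  "bwa_active tot i \<longleftrightarrow> bit tot i"

text \<open>Cost of Search(v) when v lies in the rank-j segment (first success at rank j):
the loop visits ranks K-1 down to j; every visited rank costs 1 (loop step and
activity test), and every visited active rank additionally costs a binary search of
the segment, whose cost is given by the function bs applied to the segment length.\<close>

definition search_cost :: "(nat \<Rightarrow> real) \<Rightarrow> nat \<Rightarrow> nat \<Rightarrow> nat \<Rightarrow> real" where
  "search_cost bs K tot j =
     (\<Sum>i\<in>{j..<K}. 1 + (if bwa_active tot i then bs (seg_len i) else 0))"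

definition seg_prob :: "nat \<Rightarrow> nat \<Rightarrow> nat \<Rightarrow> real" where
  "seg_prob K tot j =
     real (seg_len j) / (\<Sum>i | i < K \<and> bwa_active tot i. real (seg_len i))"

definition expected_search_cost :: "(nat \<Rightarrow> real) \<Rightarrow> nat \<Rightarrow> nat \<Rightarrow> real" where
  "expected_search_cost bs K tot =
     (\<Sum>j | j < K \<and> bwa_active tot j. seg_prob K tot j * search_cost bs K tot j)"

end

theory Submission
  imports Defs
begin

text \<open>Let \<open>a\<close> be the highest active rank below \<open>K\<close>. A search ending at rank \<open>j\<close> performs
at most \<open>K\<close> loop steps and at most \<open>a + 1 - j\<close> binary searches, each of cost \<open>O(K)\<close>.
Rank \<open>j\<close> is hit with probability at most \<open>2^j / 2^a\<close>, and
\<open>\<Sum>j\<le>a. 2^j (a + 1 - j) \<le> 4 \<cdot> 2^a\<close>, so only \<open>O(1)\<close> binary searches are expected: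
the expected cost is \<open>O(K) = O(m)\<close>.\<close>

lemma sum_pow2_atMost: "(\<Sum>j\<le>a. (2::real) ^ j) = 2 ^ Suc a - 1"
  by (induction a) auto

lemma sum_pow2_times_distance:
  "(\<Sum>j\<le>a. (2::real) ^ j * (real a + 1 - real j)) = 2 ^ (a + 2) - real a - 3"
proof (induction a)
  case 0
  then show ?case by simp
next
  case (Suc a)
  have "(\<Sum>j\<le>Suc a. (2::real) ^ j * (real (Suc a) + 1 - real j))
      = (\<Sum>j\<le>Suc a. (2::real) ^ j * (real a + 1 - real j)) + (\<Sum>j\<le>Suc a. 2 ^ j)"
    by (simp add: sum.distrib[symmetric] algebra_simps)
  also have "\<dots> = (\<Sum>j\<le>a. (2::real) ^ j * (real a + 1 - real j)) + (\<Sum>j\<le>Suc a. 2 ^ j)"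
    by simp
  also have "\<dots> = 2 ^ (Suc a + 2) - real (Suc a) - 3"
    using Suc sum_pow2_atMost[of "Suc a"] by simp
  finally show ?case .
qed

lemma sum_pow2_times_distance_le:
  "(\<Sum>j\<le>a. (2::real) ^ j * (real a + 1 - real j)) \<le> 4 * 2 ^ a"
  by (simp add: sum_pow2_times_distance)

definition active_ranks :: "nat \<Rightarrow> nat \<Rightarrow> nat set" where
  "active_ranks K tot = {j. j < K \<and> bwa_active tot j}"

lemma finite_active_ranks [simp]: "finite (active_ranks K tot)"
  by (simp add: active_ranks_def)

lemma search_cost_le:
  assumes "j \<le> a"
    and "B \<ge> 0"
    and "\<And>i. i \<in> active_ranks K tot \<Longrightarrow> i \<le> a \<and> bs (seg_len i) \<le> B"
  shows "search_cost bs K tot j \<le> real K + B * (real a + 1 - real j)"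
proof -
  have "search_cost bs K tot j
      = (\<Sum>i\<in>{j..<K}. 1) + (\<Sum>i\<in>{j..<K}. if bwa_active tot i then bs (seg_len i) else 0)"
    unfolding search_cost_def by (simp add: sum.distrib)
  also have "(\<Sum>i\<in>{j..<K}. 1::real) \<le> real K"
    by simp
  also have "(\<Sum>i\<in>{j..<K}. if bwa_active tot i then bs (seg_len i) else 0)
      \<le> (\<Sum>i\<in>{j..a}. B)"
  proof -
    have "(\<Sum>i\<in>{j..<K}. if bwa_active tot i then bs (seg_len i) else 0)
        \<le> (\<Sum>i\<in>{j..<K}. if i \<le> a then B else 0)"
      by (rule sum_mono) (use assms(2,3) in \<open>auto simp: active_ranks_def\<close>)
    also have "\<dots> = (\<Sum>i\<in>{j..<K} \<inter> {..a}. B)"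
      by (subst sum.inter_restrict) auto
    also have "\<dots> \<le> (\<Sum>i\<in>{j..a}. B)"
      by (rule sum_mono2) (use assms(2) in auto)
    finally show ?thesis .
  qed
  also have "(\<Sum>i\<in>{j..a}. B) = B * (real a + 1 - real j)"
    using assms(1) by (simp add: of_nat_diff algebra_simps)
  finally show ?thesis
    by simp
qed

lemma expected_search_cost_le:
  assumes "B \<ge> 0"
    and "\<And>i. i \<in> active_ranks K tot \<Longrightarrow> bs (seg_len i) \<le> B"
  shows "expected_search_cost bs K tot \<le> real K + 4 * B"
proof (cases "active_ranks K tot = {}")
  case True
  then show ?thesis
    using assms(1) by (simp add: expected_search_cost_def active_ranks_def[symmetric])
next
  case False
  define A where "A = active_ranks K tot"
  define a where "a = Max A"
  define S where "S = (\<Sum>i\<in>A. (2::real) ^ i)"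
  have le_a: "i \<le> a" if "i \<in> A" for i
    using that by (simp add: a_def A_def)
  have "2 ^ a \<le> S"
    unfolding S_def a_def using False A_def by (intro member_le_sum) auto
  then have S_pos: "S > 0"
    by (rule order_less_le_trans[rotated]) simp
  have weighted_distance: "(\<Sum>j\<in>A. 2 ^ j * (real a + 1 - real j)) \<le> 4 * S"
  proof -
    have "(\<Sum>j\<in>A. (2::real) ^ j * (real a + 1 - real j))
        \<le> (\<Sum>j\<le>a. 2 ^ j * (real a + 1 - real j))"
      using le_a by (intro sum_mono2) auto
    also have "\<dots> \<le> 4 * S"
      using sum_pow2_times_distance_le[of a] \<open>2 ^ a \<le> S\<close> by linarith
    finally show ?thesis .
  qed
  have "expected_search_cost bs K tot = (\<Sum>j\<in>A. 2 ^ j / S * search_cost bs K tot j)"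
    by (simp add: expected_search_cost_def seg_prob_def seg_len_def S_def A_def active_ranks_def)
  also have "\<dots> \<le> (\<Sum>j\<in>A. 2 ^ j / S * (real K + B * (real a + 1 - real j)))"
    using S_pos assms le_a
    by (intro sum_mono mult_left_mono search_cost_le) (auto simp: A_def)
  also have "\<dots> = real K * (\<Sum>j\<in>A. 2 ^ j / S) + B / S * (\<Sum>j\<in>A. 2 ^ j * (real a + 1 - real j))"
    unfolding sum_distrib_left sum.distrib[symmetric]
    using S_pos by (intro sum.cong) (auto simp: field_simps)
  also have "\<dots> = real K + B / S * (\<Sum>j\<in>A. 2 ^ j * (real a + 1 - real j))"
    using S_pos by (simp add: S_def sum_divide_distrib[symmetric])
  also have "\<dots> \<le> real K + B / S * (4 * S)"
    using weighted_distance S_pos assms(1) by (intro add_left_mono mult_left_mono) auto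
  also have "\<dots> = real K + 4 * B"
    using S_pos by simp
  finally show ?thesis .
qed

theorem mainTheorem9:
  fixes bs :: "nat \<Rightarrow> real" and C :: real
  assumes bs_cost: "\<forall>L::nat. L \<ge> 1 \<longrightarrow> bs L \<le> C * (log 2 (real L) + 1)"
  shows "\<exists>D::real. \<forall>(m::nat) (K::nat) (tot::nat).
           1 \<le> m \<longrightarrow> 0 < tot \<longrightarrow> tot \<le> 2 ^ m \<longrightarrow> tot < 2 ^ K \<longrightarrow> K \<le> m + 1 \<longrightarrow>
           expected_search_cost bs K tot \<le> D * log 2 (real ((2::nat) ^ m))"
proof (intro exI allI impI)
  fix m K tot :: nat
  assume "1 \<le> m" and "K \<le> m + 1"
  have bs_seg: "bs (seg_len i) \<le> \<bar>C\<bar> * real K" if "i \<in> active_ranks K tot" for i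
  proof -
    have "bs (seg_len i) \<le> C * (real i + 1)"
      using bs_cost[rule_format, of "2 ^ i"] by (simp add: seg_len_def log_nat_power)
    also have "\<dots> \<le> \<bar>C\<bar> * real K"
      using that by (intro mult_mono) (auto simp: active_ranks_def)
    finally show ?thesis .
  qed
  have "expected_search_cost bs K tot \<le> real K + 4 * (\<bar>C\<bar> * real K)"
    by (rule expected_search_cost_le) (use bs_seg in auto)
  also have "\<dots> = (1 + 4 * \<bar>C\<bar>) * real K"
    by (simp add: algebra_simps)
  also have "\<dots> \<le> (1 + 4 * \<bar>C\<bar>) * (2 * real m)"
    using \<open>1 \<le> m\<close> \<open>K \<le> m + 1\<close> by (intro mult_left_mono) auto
  also have "\<dots> = (2 + 8 * \<bar>C\<bar>) * real m"
    by (simp add: algebra_simps)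
  also have "\<dots> = (2 + 8 * \<bar>C\<bar>) * log 2 (real ((2::nat) ^ m))"
    by (simp add: log_nat_power)
  finally show "expected_search_cost bs K tot \<le> (2 + 8 * \<bar>C\<bar>) * log 2 (real ((2::nat) ^ m))" .
qed

end
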